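(* Let $G$ be a dicotic nonzugzwang scoring game all of whose terminal positions are numbers. Then $m(G)-\sigma(G)\leq Rs(G)\leq m(G)\leq Ls(G)\leq m(G)+\sigma(G)$.
   Context: A scoring game is $G=\langle G^L\mid G^R\rangle$ with $G^L,G^R$ finite nonempty sets of scoring games or empty sets decorated with a real, $\emptyset^s$; $\langle\emptyset^s\mid\emptyset^s\rangle$ is the number $s$. $Ls(\langle\emptyset^s\mid G^R\rangle)=s$, $Rs(\langle G^L\mid\emptyset^s\rangle)=s$, otherwise $Ls(G)=\max_{G^l\in G^L}Rs(G^l)$, $Rs(G)=\min_{G^r\in G^R}Ls(G^r)$. Disjunctive sum: Left options of $G_1+G_2$ are all $G_1^l+G_2$, $G_1+G_2^l$ (Left side $\emptyset^{\ell_1+\ell_2}$ if neither has Left options), symmetrically for Right; $H+c$ adds the number $c$ to all terminal scores; $nG$ is the sum of $n$ copies. Dicotic: at every position both players have options or neither; nonzugzwang: $Ls(H)\ge Rs(H)$ at every position. Mean: $m(G)=\lim_{n\to\infty}Ls(nG)/n=\lim_{n\to\infty}Rs(nG)/n$ (these exist and agree for dicotic nonzugzwang games). Cooling: if $G$ is a number $k$, $G_t=k$, $\sigma(G)=0$; otherwise $\widetilde G_t=\langle \{G^l_t-t\}\mid \{G^r_t+t\}\rangle$, $t_0=\min\{t\ge0: Ls(\widetilde G_t)=Rs(\widetilde G_t)\}$, $G_t=\widetilde G_t$ for $t\le t_0$ and the number $Ls(\widetilde G_{t_0})$ for $t>t_0$; $\sigma(G)=t_0$ is the temperature. *)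

theory Defs
  imports Complex_Main "HOL-Library.FSet"
begin

text \<open>A side of a game is either an empty set decorated with a real
  (Inl s, i.e. the empty set with score s) or a finite set of options (Inr A); the
  well-formedness predicate sgwf below demands that every such A be nonempty.\<close>

datatype sgame = SGame "real + sgame fset" "real + sgame fset"

primrec lside :: "sgame \<Rightarrow> real + sgame fset" where
  "lside (SGame l r) = l"
primrec rside :: "sgame \<Rightarrow> real + sgame fset" where
  "rside (SGame l r) = r"

definition opts :: "real + sgame fset \<Rightarrow> sgame fset" where
  "opts s = (case s of Inl _ \<Rightarrow> {||} | Inr A \<Rightarrow> A)"

definition lopts :: "sgame \<Rightarrow> sgame fset" where "lopts G = opts (lside G)"
definition ropts :: "sgame \<Rightarrow> sgame fset" where "ropts G = opts (rside G)"

definition num :: "real \<Rightarrow> sgame" where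
  "num s = SGame (Inl s) (Inl s)"

definition is_number :: "sgame \<Rightarrow> bool" where
  "is_number G \<longleftrightarrow> (\<exists>s. G = num s)"

inductive_set positions :: "sgame \<Rightarrow> sgame set" for G where
  self: "G \<in> positions G"
| lopt: "H \<in> positions G \<Longrightarrow> H' |\<in>| lopts H \<Longrightarrow> H' \<in> positions G"
| ropt: "H \<in> positions G \<Longrightarrow> H' |\<in>| ropts H \<Longrightarrow> H' \<in> positions G"

definition sgwf :: "sgame \<Rightarrow> bool" where
  "sgwf G \<longleftrightarrow> (\<forall>H\<in>positions G. (\<forall>A. lside H = Inr A \<longrightarrow> A \<noteq> {||}) \<and>
                                    (\<forall>A. rside H = Inr A \<longrightarrow> A \<noteq> {||}))"

primrec scores :: "sgame \<Rightarrow> real \<times> real" where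
  "scores (SGame l r) =
     (case map_sum id (fimage scores) l of
        Inl s \<Rightarrow> s
      | Inr P \<Rightarrow> Max (snd ` fset P),
      case map_sum id (fimage scores) r of
        Inl s \<Rightarrow> s
      | Inr P \<Rightarrow> Min (fst ` fset P))"

definition Ls :: "sgame \<Rightarrow> real" where "Ls G = fst (scores G)"
definition Rs :: "sgame \<Rightarrow> real" where "Rs G = snd (scores G)"

primrec shift :: "real \<Rightarrow> sgame \<Rightarrow> sgame" where
  "shift c (SGame l r) =
     SGame (map_sum (\<lambda>s. s + c) (fimage (shift c)) l) (map_sum (\<lambda>s. s + c) (fimage (shift c)) r)"

function (sequential) gplus :: "sgame \<Rightarrow> sgame \<Rightarrow> sgame" where
  "gplus (SGame gl gr) (SGame hl hr) =
     SGame
      (case (gl, hl) of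
         (Inl a, Inl b) \<Rightarrow> Inl (a + b)
       | _ \<Rightarrow> Inr ((\<lambda>x. gplus x (SGame hl hr)) |`| opts gl
                  |\<union>| (\<lambda>y. gplus (SGame gl gr) y) |`| opts hl))
      (case (gr, hr) of
         (Inl a, Inl b) \<Rightarrow> Inl (a + b)
       | _ \<Rightarrow> Inr ((\<lambda>x. gplus x (SGame hl hr)) |`| opts gr
                  |\<union>| (\<lambda>y. gplus (SGame gl gr) y) |`| opts hr))"
  by pat_completeness auto

lemma opts_size_aux: "x |\<in>| A \<Longrightarrow> size x < size_fset size A"
proof -
  assume "x |\<in>| A"
  then have "Suc (size x) \<le> (\<Sum>y\<in>fset A. Suc (size y))"
    by (intro member_le_sum) auto
  then show ?thesis by simp
qed

lemma opts_size: "x |\<in>| opts s \<Longrightarrow> size x < size (SGame s t) \<and> size x < size (SGame t s)"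
  by (cases s) (auto simp: opts_def dest!: opts_size_aux)

termination
  apply (relation "measure (\<lambda>(G, H). size G + size H)")
  apply (auto dest!: opts_size)
  done


primrec gmult :: "nat \<Rightarrow> sgame \<Rightarrow> sgame" where
  "gmult 0 G = num 0"
| "gmult (Suc n) G = gplus G (gmult n G)"

text \<open>Mean: lim Ls(nG)/n (the paper shows the limit exists for dicotic nonzugzwang games).\<close>
definition mean :: "sgame \<Rightarrow> real" where
  "mean G = lim (\<lambda>n. Ls (gmult n G) / real n)"

definition terminal :: "sgame \<Rightarrow> bool" where
  "terminal H \<longleftrightarrow> lopts H = {||} \<and> ropts H = {||}"

definition dicotic :: "sgame \<Rightarrow> bool" where
  "dicotic G \<longleftrightarrow> (\<forall>H\<in>positions G. lopts H = {||} \<longleftrightarrow> ropts H = {||})"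

definition nonzugzwang :: "sgame \<Rightarrow> bool" where
  "nonzugzwang G \<longleftrightarrow> (\<forall>H\<in>positions G. Ls H \<ge> Rs H)"

text \<open>Cooling: cool G t is G_t. For a non-number G, the auxiliary game
  tilde G_t = < G^L_t - t | G^R_t + t > is formed, t0 = min{t >= 0. Ls = Rs of it}.\<close>
primrec cool :: "sgame \<Rightarrow> real \<Rightarrow> sgame" where
  "cool (SGame l r) =
     (let L = map_sum id (fimage cool) l;
          R = map_sum id (fimage cool) r;
          tl = (\<lambda>t. SGame (map_sum id (fimage (\<lambda>f. shift (- t) (f t))) L)
                           (map_sum id (fimage (\<lambda>f. shift t (f t))) R));
          t0 = Inf {t. 0 \<le> t \<and> Ls (tl t) = Rs (tl t)}
      in if is_number (SGame l r) then (\<lambda>t. SGame l r)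
         else (\<lambda>t. if t \<le> t0 then tl t else num (Ls (tl t0))))"

definition cool_tilde :: "sgame \<Rightarrow> real \<Rightarrow> sgame" where
  "cool_tilde G t = SGame (map_sum id (fimage (\<lambda>g. shift (- t) (cool g t))) (lside G))
                          (map_sum id (fimage (\<lambda>g. shift t (cool g t))) (rside G))"

definition temp :: "sgame \<Rightarrow> real" where
  "temp G = (if is_number G then 0
             else Inf {t. 0 \<le> t \<and> Ls (cool_tilde G t) = Rs (cool_tilde G t)})"

end

theory Submission
  imports Defs "HOL-Analysis.Analysis"
begin

(* For such games the scores of a sum satisfy
     Rs G + Rs H <= Rs (G + H) <= Rs G + Ls H <= Ls (H + G) <= Ls H + Ls G.
   Cooling by t >= 0 lowers Ls and raises Rs, each by at most t, and for t > sigma(G) the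
   cooled game G_t is the number v = Ls (G_sigma(G)). The key estimate, by induction on
   positions, compares a finite sum S of such games with the sum S' of the cooled games:
     Ls S' <= Ls S <= Ls S' + t   and   Rs S' - t <= Rs S <= Rs S'.
   For n copies of G and t > sigma(G), S' is the number n v, so n v <= Ls (nG) <= n v + t
   and m(G) = v. The bounds then follow from comparing G = G_0 with G_sigma(G). *)

lemma Max_image_le_Max_image:
  fixes f g :: "'i \<Rightarrow> 'b::linorder"
  assumes "finite I" "\<And>i. i \<in> I \<Longrightarrow> f i \<le> g i"
  shows "Max (f ` I) \<le> Max (g ` I)"
proof (cases "I = {}")
  case False
  have "f i \<le> Max (g ` I)" if "i \<in> I" for i
    using assms that by (meson Max_ge finite_imageI imageI order_trans)
  with False assms(1) show ?thesis
    by simp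
qed simp

lemma Min_image_le_Min_image:
  fixes f g :: "'i \<Rightarrow> 'b::linorder"
  assumes "finite I" "\<And>i. i \<in> I \<Longrightarrow> f i \<le> g i"
  shows "Min (f ` I) \<le> Min (g ` I)"
proof (cases "I = {}")
  case False
  have "Min (f ` I) \<le> g i" if "i \<in> I" for i
    using assms that by (meson Min_le finite_imageI imageI order_trans)
  with False assms(1) show ?thesis
    by simp
qed simp

lemma mono_Max_image:
  "finite I \<Longrightarrow> (\<And>i. i \<in> I \<Longrightarrow> mono (f i)) \<Longrightarrow> mono (\<lambda>x. Max ((\<lambda>i. f i x) ` I))"
  by (intro monoI Max_image_le_Max_image) (auto dest: monoD)

lemma antimono_Max_image:
  "finite I \<Longrightarrow> (\<And>i. i \<in> I \<Longrightarrow> antimono (f i)) \<Longrightarrow> antimono (\<lambda>x. Max ((\<lambda>i. f i x) ` I))"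
  by (intro antimonoI Max_image_le_Max_image) (auto dest: antimonoD)

lemma mono_Min_image:
  "finite I \<Longrightarrow> (\<And>i. i \<in> I \<Longrightarrow> mono (f i)) \<Longrightarrow> mono (\<lambda>x. Min ((\<lambda>i. f i x) ` I))"
  by (intro monoI Min_image_le_Min_image) (auto dest: monoD)

lemma antimono_Min_image:
  "finite I \<Longrightarrow> (\<And>i. i \<in> I \<Longrightarrow> antimono (f i)) \<Longrightarrow> antimono (\<lambda>x. Min ((\<lambda>i. f i x) ` I))"
  by (intro antimonoI Min_image_le_Min_image) (auto dest: antimonoD)

lemma continuous_on_antimono_bounded_slope:
  fixes d :: "real \<Rightarrow> real"
  assumes "antimono d" "mono (\<lambda>t. d t + c * t)" "0 \<le> c"
  shows "continuous_on S d"
proof (rule lipschitz_on_continuous_on)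
  have "\<bar>d x - d y\<bar> \<le> c * \<bar>x - y\<bar>" if "x \<le> y" for x y
    using antimonoD[OF assms(1) that] monoD[OF assms(2) that] that by (simp add: algebra_simps)
  then show "c-lipschitz_on S d"
    using assms(3) unfolding lipschitz_on_def dist_real_def
    by (metis abs_minus_commute linorder_le_cases)
qed

lemma Inf_zeros_mem:
  fixes d :: "real \<Rightarrow> real"
  assumes "continuous_on {0..} d" "0 \<le> d 0" "0 \<le> T" "d T \<le> 0"
  shows "Inf {t. 0 \<le> t \<and> d t = 0} \<in> {t. 0 \<le> t \<and> d t = 0}"
proof -
  let ?Z = "{t \<in> {0..}. d t = 0}"
  obtain z where "0 \<le> z" "z \<le> T" "d z = 0"
    using IVT2'[of d T 0 0] assms continuous_on_subset[OF assms(1)] by fastforce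
  then have "?Z \<noteq> {}" by auto
  moreover have "bdd_below ?Z"
    by (auto intro: bdd_belowI[of _ 0])
  moreover have "closed ?Z"
    by (rule continuous_closed_preimage_constant[OF assms(1)]) simp
  ultimately have "Inf ?Z \<in> ?Z"
    by (rule closed_contains_Inf)
  then show ?thesis by simp
qed

section \<open>Scores of dicotic games\<close>

(* Hereditarily a number or a game with nonempty sets of options on both sides: a dicotic
   game whose terminal positions are numbers. *)
inductive dicotic_game :: "sgame \<Rightarrow> bool" where
  dicotic_numI: "dicotic_game (num s)"
| dicotic_gameI: "A \<noteq> {||} \<Longrightarrow> B \<noteq> {||} \<Longrightarrow> (\<And>x. x |\<in>| A |\<union>| B \<Longrightarrow> dicotic_game x)
    \<Longrightarrow> dicotic_game (SGame (Inr A) (Inr B))"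

inductive nz_game :: "sgame \<Rightarrow> bool" where
  nz_numI: "nz_game (num s)"
| nz_gameI: "A \<noteq> {||} \<Longrightarrow> B \<noteq> {||} \<Longrightarrow> (\<And>x. x |\<in>| A |\<union>| B \<Longrightarrow> nz_game x)
    \<Longrightarrow> Rs (SGame (Inr A) (Inr B)) \<le> Ls (SGame (Inr A) (Inr B))
    \<Longrightarrow> nz_game (SGame (Inr A) (Inr B))"

lemma size_lopts: "x |\<in>| lopts G \<Longrightarrow> size x < size G"
  by (cases G) (auto simp: lopts_def dest: opts_size)

lemma size_ropts: "x |\<in>| ropts G \<Longrightarrow> size x < size G"
  by (cases G) (auto simp: ropts_def dest: opts_size)

lemma Ls_num [simp]: "Ls (num s) = s"
  and Rs_num [simp]: "Rs (num s) = s"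
  by (simp_all add: Ls_def Rs_def num_def)

lemma Ls_SGame: "Ls (SGame (Inr A) r) = Max (Rs ` fset A)"
  by (cases r) (simp_all add: Ls_def Rs_def image_image)

lemma Rs_SGame: "Rs (SGame l (Inr B)) = Min (Ls ` fset B)"
  by (cases l) (simp_all add: Ls_def Rs_def image_image)

lemma lopts_num [simp]: "lopts (num s) = {||}"
  and ropts_num [simp]: "ropts (num s) = {||}"
  by (simp_all add: lopts_def ropts_def num_def opts_def)

lemma lopts_SGame [simp]: "lopts (SGame (Inr A) r) = A"
  and ropts_SGame [simp]: "ropts (SGame l (Inr B)) = B"
  by (simp_all add: lopts_def ropts_def opts_def)

lemma is_number_num [simp]: "is_number (num s)"
  by (auto simp: is_number_def)

lemma SGame_neq_num [simp]: "SGame (Inr A) r \<noteq> num s" "SGame l (Inr B) \<noteq> num s"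
  by (auto simp: num_def)

lemma is_number_SGame [simp]: "\<not> is_number (SGame (Inr A) r)" "\<not> is_number (SGame l (Inr B))"
  by (auto simp: is_number_def)

lemma nz_game_dicotic: "nz_game G \<Longrightarrow> dicotic_game G"
  by (induction rule: nz_game.induct) (auto intro: dicotic_game.intros)

lemma nz_game_Rs_le_Ls: "nz_game G \<Longrightarrow> Rs G \<le> Ls G"
  by (induction rule: nz_game.induct) auto

lemma dicotic_game_nonnumberE:
  assumes "dicotic_game G" "\<not> is_number G"
  obtains A B where "G = SGame (Inr A) (Inr B)" "A \<noteq> {||}" "B \<noteq> {||}"
  using assms by (cases rule: dicotic_game.cases) auto

lemma dicotic_game_opts:
  "dicotic_game G \<Longrightarrow> x |\<in>| lopts G \<Longrightarrow> dicotic_game x"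
  "dicotic_game G \<Longrightarrow> x |\<in>| ropts G \<Longrightarrow> dicotic_game x"
  by (auto elim!: dicotic_game.cases)

lemma nz_game_opts:
  "nz_game G \<Longrightarrow> x |\<in>| lopts G \<Longrightarrow> nz_game x"
  "nz_game G \<Longrightarrow> x |\<in>| ropts G \<Longrightarrow> nz_game x"
  by (auto elim!: nz_game.cases)

lemma is_number_iff_opts_empty:
  "dicotic_game G \<Longrightarrow> is_number G \<longleftrightarrow> lopts G = {||}"
  "dicotic_game G \<Longrightarrow> is_number G \<longleftrightarrow> ropts G = {||}"
  by (auto elim!: dicotic_game.cases)

lemma Ls_eq_Max:
  "dicotic_game G \<Longrightarrow> \<not> is_number G \<Longrightarrow> Ls G = Max (Rs ` fset (lopts G))"
  by (auto elim: dicotic_game_nonnumberE simp: Ls_SGame)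

lemma Rs_eq_Min:
  "dicotic_game G \<Longrightarrow> \<not> is_number G \<Longrightarrow> Rs G = Min (Ls ` fset (ropts G))"
  by (auto elim: dicotic_game_nonnumberE simp: Rs_SGame)

lemma Rs_lopt_le_Ls: "dicotic_game G \<Longrightarrow> x |\<in>| lopts G \<Longrightarrow> Rs x \<le> Ls G"
  by (subst Ls_eq_Max) (auto simp: is_number_iff_opts_empty)

lemma Rs_le_Ls_ropt: "dicotic_game G \<Longrightarrow> x |\<in>| ropts G \<Longrightarrow> Rs G \<le> Ls x"
  by (subst Rs_eq_Min) (auto simp: is_number_iff_opts_empty(2))

lemma Ls_attained:
  assumes "dicotic_game G" "\<not> is_number G"
  obtains x where "x |\<in>| lopts G" "Ls G = Rs x"
proof -
  have "lopts G \<noteq> {||}"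
    using assms is_number_iff_opts_empty by auto
  then have "Max (Rs ` fset (lopts G)) \<in> Rs ` fset (lopts G)"
    by (intro Max_in) auto
  then show ?thesis
    using that Ls_eq_Max[OF assms] by auto
qed

lemma Rs_attained:
  assumes "dicotic_game G" "\<not> is_number G"
  obtains x where "x |\<in>| ropts G" "Rs G = Ls x"
proof -
  have "ropts G \<noteq> {||}"
    using assms is_number_iff_opts_empty by auto
  then have "Min (Ls ` fset (ropts G)) \<in> Ls ` fset (ropts G)"
    by (intro Min_in) auto
  then show ?thesis
    using that Rs_eq_Min[OF assms] by auto
qed

lemma Ls_leI:
  "dicotic_game G \<Longrightarrow> \<not> is_number G \<Longrightarrow> (\<And>x. x |\<in>| lopts G \<Longrightarrow> Rs x \<le> c) \<Longrightarrow> Ls G \<le> c"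
  by (metis Ls_attained)

lemma Rs_geI:
  "dicotic_game G \<Longrightarrow> \<not> is_number G \<Longrightarrow> (\<And>x. x |\<in>| ropts G \<Longrightarrow> c \<le> Ls x) \<Longrightarrow> c \<le> Rs G"
  by (metis Rs_attained)

lemma shift_num [simp]: "shift c (num s) = num (s + c)"
  by (simp add: num_def)

lemma shift_0 [simp]: "shift 0 G = G"
proof (induction G)
  case (SGame l r)
  then show ?case
    by (cases l; cases r) (auto intro!: fset.map_ident_strong)
qed

lemma dicotic_game_shift: "dicotic_game G \<Longrightarrow> dicotic_game (shift c G)"
  by (induction rule: dicotic_game.induct) (auto intro: dicotic_game.intros)

lemma Ls_shift: "dicotic_game G \<Longrightarrow> Ls (shift c G) = Ls G + c"
  and Rs_shift: "dicotic_game G \<Longrightarrow> Rs (shift c G) = Rs G + c"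
proof (induction rule: dicotic_game.induct)
  case (dicotic_gameI A B)
  { case 1
    then show ?case
      using dicotic_gameI Max_add_commute[of "fset A" Rs c]
      by (auto simp: Ls_SGame image_image cong: image_cong)
  next
    case 2
    then show ?case
      using dicotic_gameI Min_add_commute[of "fset B" Ls c]
      by (auto simp: Rs_SGame image_image cong: image_cong) }
qed simp_all

lemma nz_game_shift: "nz_game G \<Longrightarrow> nz_game (shift c G)"
proof (induction rule: nz_game.induct)
  case (nz_gameI A B)
  have "dicotic_game (SGame (Inr A) (Inr B))"
    using nz_gameI.hyps by (blast intro: nz_game.intros nz_game_dicotic)
  from Ls_shift[OF this] Rs_shift[OF this]
  have "Rs (SGame (Inr (shift c |`| A)) (Inr (shift c |`| B)))
     \<le> Ls (SGame (Inr (shift c |`| A)) (Inr (shift c |`| B)))"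
    using nz_gameI.hyps(4) by simp
  then show ?case
    using nz_gameI by (simp, intro nz_game.nz_gameI) auto
qed (simp add: nz_numI)

section \<open>Disjunctive sums\<close>

lemma gplus_eq: "gplus G H = SGame
  (case (lside G, lside H) of
     (Inl a, Inl b) \<Rightarrow> Inl (a + b)
   | _ \<Rightarrow> Inr ((\<lambda>x. gplus x H) |`| lopts G |\<union>| gplus G |`| lopts H))
  (case (rside G, rside H) of
     (Inl a, Inl b) \<Rightarrow> Inl (a + b)
   | _ \<Rightarrow> Inr ((\<lambda>x. gplus x H) |`| ropts G |\<union>| gplus G |`| ropts H))"
  by (cases G; cases H) (simp add: lopts_def ropts_def split: sum.splits)

lemma lopts_gplus: "lopts (gplus G H) = (\<lambda>x. gplus x H) |`| lopts G |\<union>| gplus G |`| lopts H"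
  by (subst gplus_eq) (auto simp: lopts_def opts_def split: sum.splits)

lemma ropts_gplus: "ropts (gplus G H) = (\<lambda>x. gplus x H) |`| ropts G |\<union>| gplus G |`| ropts H"
  by (subst gplus_eq) (auto simp: ropts_def opts_def split: sum.splits)

lemma gplus_num: "gplus (num a) H = shift a H"
proof (induction H)
  case (SGame l r)
  have "gplus (num a) z = shift a z" if "z |\<in>| opts l \<or> z |\<in>| opts r" for z
    using SGame that by (cases l; cases r) (auto simp: opts_def)
  then show ?case
    by (cases l; cases r) (auto simp: num_def opts_def intro!: fset.map_cong0)
qed

lemma gplus_comm: "gplus G H = gplus H G"
proof (induction "size G + size H" arbitrary: G H rule: less_induct)
  case less
  have "(\<lambda>x. gplus x H) |`| lopts G = gplus H |`| lopts G"
       "gplus G |`| lopts H = (\<lambda>x. gplus x G) |`| lopts H"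
       "(\<lambda>x. gplus x H) |`| ropts G = gplus H |`| ropts G"
       "gplus G |`| ropts H = (\<lambda>x. gplus x G) |`| ropts H"
    by (auto intro!: fset.map_cong0 less dest: size_lopts size_ropts)
  then show ?case
    by (subst (1 2) gplus_eq) (auto simp: add.commute split: sum.splits)
qed

lemma sgame_eqI: "lside G = lside H \<Longrightarrow> rside G = rside H \<Longrightarrow> G = H"
  by (cases G; cases H) auto

lemma lside_gplus: "lside (gplus G H) =
  (if isl (lside G) \<and> isl (lside H) then Inl (projl (lside G) + projl (lside H))
   else Inr ((\<lambda>x. gplus x H) |`| lopts G |\<union>| gplus G |`| lopts H))"
  by (subst gplus_eq) (auto split: sum.splits)

lemma rside_gplus: "rside (gplus G H) =
  (if isl (rside G) \<and> isl (rside H) then Inl (projl (rside G) + projl (rside H))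
   else Inr ((\<lambda>x. gplus x H) |`| ropts G |\<union>| gplus G |`| ropts H))"
  by (subst gplus_eq) (auto split: sum.splits)

lemma gplus_assoc: "gplus (gplus G H) K = gplus G (gplus H K)"
proof (induction "size G + size H + size K" arbitrary: G H K rule: less_induct)
  case less
  have IH: "(\<lambda>x. gplus (gplus x H) K) |`| lopts G = (\<lambda>x. gplus x (gplus H K)) |`| lopts G"
    "(\<lambda>x. gplus (gplus G x) K) |`| lopts H = (\<lambda>x. gplus G (gplus x K)) |`| lopts H"
    "gplus (gplus G H) |`| lopts K = (\<lambda>x. gplus G (gplus H x)) |`| lopts K"
    "(\<lambda>x. gplus (gplus x H) K) |`| ropts G = (\<lambda>x. gplus x (gplus H K)) |`| ropts G"
    "(\<lambda>x. gplus (gplus G x) K) |`| ropts H = (\<lambda>x. gplus G (gplus x K)) |`| ropts H"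
    "gplus (gplus G H) |`| ropts K = (\<lambda>x. gplus G (gplus H x)) |`| ropts K"
    by (auto intro!: fset.map_cong0 less dest: size_lopts size_ropts)
  have "(\<lambda>x. gplus x K) |`| lopts (gplus G H) |\<union>| gplus (gplus G H) |`| lopts K
      = (\<lambda>x. gplus x (gplus H K)) |`| lopts G |\<union>| gplus G |`| lopts (gplus H K)"
       "(\<lambda>x. gplus x K) |`| ropts (gplus G H) |\<union>| gplus (gplus G H) |`| ropts K
      = (\<lambda>x. gplus x (gplus H K)) |`| ropts G |\<union>| gplus G |`| ropts (gplus H K)"
    unfolding lopts_gplus ropts_gplus fimage_funion fset.map_comp o_def IH
    by (simp_all add: funion_assoc)
  then show ?case
    by (intro sgame_eqI) (simp_all add: lside_gplus rside_gplus add.assoc)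
qed

lemma gplus_shift: "gplus (shift c G) H = shift c (gplus G H)"
  by (metis gplus_assoc gplus_num)

lemma is_number_lside: "dicotic_game G \<Longrightarrow> isl (lside G) \<longleftrightarrow> is_number G"
  and is_number_rside: "dicotic_game G \<Longrightarrow> isl (rside G) \<longleftrightarrow> is_number G"
  by (auto elim!: dicotic_game.cases simp: num_def is_number_def)

lemma gplus_nonnumber:
  assumes "dicotic_game G" "dicotic_game H" "\<not> (is_number G \<and> is_number H)"
  shows "gplus G H = SGame (Inr ((\<lambda>x. gplus x H) |`| lopts G |\<union>| gplus G |`| lopts H))
                           (Inr ((\<lambda>x. gplus x H) |`| ropts G |\<union>| gplus G |`| ropts H))"
  using assms by (intro sgame_eqI) (auto simp: lside_gplus rside_gplus is_number_lside is_number_rside)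

lemma is_number_gplus:
  assumes "dicotic_game G" "dicotic_game H"
  shows "is_number (gplus G H) \<longleftrightarrow> is_number G \<and> is_number H"
proof (cases "is_number G \<and> is_number H")
  case True
  then show ?thesis by (auto simp: is_number_def gplus_num)
next
  case False
  then show ?thesis by (simp add: gplus_nonnumber[OF assms])
qed

lemma dicotic_game_gplus: "dicotic_game G \<Longrightarrow> dicotic_game H \<Longrightarrow> dicotic_game (gplus G H)"
proof (induction "size G + size H" arbitrary: G H rule: less_induct)
  case less
  show ?case
  proof (cases "is_number G \<and> is_number H")
    case True
    then show ?thesis by (auto simp: is_number_def gplus_num intro: dicotic_numI)
  next
    case False
    then have "lopts G \<noteq> {||} \<or> lopts H \<noteq> {||}" "ropts G \<noteq> {||} \<or> ropts H \<noteq> {||}"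
      using less.prems is_number_iff_opts_empty by auto
    with less show ?thesis
      by (subst gplus_nonnumber[OF less.prems False], intro dicotic_gameI)
        (auto intro!: less.hyps dest: size_lopts size_ropts dicotic_game_opts)
  qed
qed

lemma gplus_lower_bounds:
  "nz_game A \<Longrightarrow> nz_game B \<Longrightarrow> Rs A + Rs B \<le> Rs (gplus A B) \<and> Ls A + Rs B \<le> Ls (gplus A B)"
proof (induction "size A + size B" arbitrary: A B rule: less_induct)
  case less
  have dA: "dicotic_game A" and dB: "dicotic_game B" and dAB: "dicotic_game (gplus A B)"
    using less.prems nz_game_dicotic dicotic_game_gplus by auto
  have IH: "Rs x + Rs y \<le> Rs (gplus x y) \<and> Ls x + Rs y \<le> Ls (gplus x y)"
    if "size x + size y < size A + size B" "nz_game x" "nz_game y" for x y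
    using less.hyps that by blast
  have Ls_bound: "Ls A + Rs B \<le> Ls (gplus A B)"
  proof (cases "is_number A")
    case True
    then show ?thesis
      using nz_game_Rs_le_Ls[OF less.prems(2)] by (auto simp: is_number_def gplus_num Ls_shift dB)
  next
    case False
    then obtain x where x: "x |\<in>| lopts A" "Ls A = Rs x"
      using Ls_attained dA by blast
    have "Rs x + Rs B \<le> Rs (gplus x B)"
      using IH[of x B] x(1) less.prems by (auto dest: size_lopts nz_game_opts)
    also have "\<dots> \<le> Ls (gplus A B)"
      using x(1) by (intro Rs_lopt_le_Ls[OF dAB]) (simp add: lopts_gplus)
    finally show ?thesis using x by simp
  qed
  have Rs_bound: "Rs A + Rs B \<le> Rs (gplus A B)"
  proof (cases "is_number A \<and> is_number B")
    case True
    then show ?thesis by (auto simp: is_number_def gplus_num)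
  next
    case False
    then show ?thesis
    proof (intro Rs_geI[OF dAB])
      fix z assume "z |\<in>| ropts (gplus A B)"
      then consider x where "x |\<in>| ropts A" "z = gplus x B" | y where "y |\<in>| ropts B" "z = gplus A y"
        by (auto simp: ropts_gplus)
      then show "Rs A + Rs B \<le> Ls z"
      proof cases
        case (1 x)
        then show ?thesis
          using IH[of x B] less.prems Rs_le_Ls_ropt[OF dA]
          by (fastforce dest: size_ropts nz_game_opts)
      next
        case (2 y)
        then show ?thesis
          using IH[of y A] less.prems Rs_le_Ls_ropt[OF dB]
          by (fastforce dest: size_ropts nz_game_opts simp: gplus_comm)
      qed
    qed (use False dA dB in \<open>simp add: is_number_gplus\<close>)
  qed
  from Rs_bound Ls_bound show ?case ..
qed

lemma gplus_upper_bounds: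
  "nz_game A \<Longrightarrow> nz_game B \<Longrightarrow> Ls (gplus A B) \<le> Ls A + Ls B \<and> Rs (gplus A B) \<le> Rs A + Ls B"
proof (induction "size A + size B" arbitrary: A B rule: less_induct)
  case less
  have dA: "dicotic_game A" and dB: "dicotic_game B" and dAB: "dicotic_game (gplus A B)"
    using less.prems nz_game_dicotic dicotic_game_gplus by auto
  have IH: "Ls (gplus x y) \<le> Ls x + Ls y \<and> Rs (gplus x y) \<le> Rs x + Ls y"
    if "size x + size y < size A + size B" "nz_game x" "nz_game y" for x y
    using less.hyps that by blast
  have Rs_bound: "Rs (gplus A B) \<le> Rs A + Ls B"
  proof (cases "is_number A")
    case True
    then show ?thesis
      using nz_game_Rs_le_Ls[OF less.prems(2)] by (auto simp: is_number_def gplus_num Rs_shift dB)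
  next
    case False
    then obtain x where x: "x |\<in>| ropts A" "Rs A = Ls x"
      using Rs_attained dA by blast
    have "Rs (gplus A B) \<le> Ls (gplus x B)"
      using x(1) by (intro Rs_le_Ls_ropt[OF dAB]) (simp add: ropts_gplus)
    also have "\<dots> \<le> Ls x + Ls B"
      using IH[of x B] x(1) less.prems by (auto dest: size_ropts nz_game_opts)
    finally show ?thesis using x by simp
  qed
  have Ls_bound: "Ls (gplus A B) \<le> Ls A + Ls B"
  proof (cases "is_number A \<and> is_number B")
    case True
    then show ?thesis by (auto simp: is_number_def gplus_num)
  next
    case False
    then show ?thesis
    proof (intro Ls_leI[OF dAB])
      fix z assume "z |\<in>| lopts (gplus A B)"
      then consider x where "x |\<in>| lopts A" "z = gplus x B" | y where "y |\<in>| lopts B" "z = gplus A y"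
        by (auto simp: lopts_gplus)
      then show "Rs z \<le> Ls A + Ls B"
      proof cases
        case (1 x)
        then show ?thesis
          using IH[of x B] less.prems Rs_lopt_le_Ls[OF dA]
          by (fastforce dest: size_lopts nz_game_opts)
      next
        case (2 y)
        then show ?thesis
          using IH[of y A] less.prems Rs_lopt_le_Ls[OF dB]
          by (fastforce dest: size_lopts nz_game_opts simp: gplus_comm)
      qed
    qed (use False dA dB in \<open>simp add: is_number_gplus\<close>)
  qed
  from Ls_bound Rs_bound show ?case ..
qed

lemma Rs_gplus_ge: "nz_game A \<Longrightarrow> nz_game B \<Longrightarrow> Rs A + Rs B \<le> Rs (gplus A B)"
  and Ls_gplus_ge: "nz_game A \<Longrightarrow> nz_game B \<Longrightarrow> Ls A + Rs B \<le> Ls (gplus A B)"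
  and Ls_gplus_le: "nz_game A \<Longrightarrow> nz_game B \<Longrightarrow> Ls (gplus A B) \<le> Ls A + Ls B"
  and Rs_gplus_le: "nz_game A \<Longrightarrow> nz_game B \<Longrightarrow> Rs (gplus A B) \<le> Rs A + Ls B"
  using gplus_lower_bounds gplus_upper_bounds by blast+

lemma nz_game_gplus: "nz_game G \<Longrightarrow> nz_game H \<Longrightarrow> nz_game (gplus G H)"
proof (induction "size G + size H" arbitrary: G H rule: less_induct)
  case less
  have dG: "dicotic_game G" and dH: "dicotic_game H"
    using less.prems nz_game_dicotic by auto
  show ?case
  proof (cases "is_number G \<and> is_number H")
    case True
    then show ?thesis by (auto simp: is_number_def gplus_num intro: nz_numI)
  next
    case False
    have "lopts G \<noteq> {||} \<or> lopts H \<noteq> {||}" "ropts G \<noteq> {||} \<or> ropts H \<noteq> {||}"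
      using False dG dH is_number_iff_opts_empty by auto
    moreover have "Rs (gplus G H) \<le> Ls (gplus G H)"
      using Rs_gplus_le[OF less.prems] Ls_gplus_ge[OF less.prems(2,1)] by (simp add: gplus_comm)
    ultimately show ?thesis
      using less gplus_nonnumber[OF dG dH False]
      by (subst gplus_nonnumber[OF dG dH False], intro nz_gameI)
        (auto intro!: less.hyps dest: size_lopts size_ropts nz_game_opts)
  qed
qed

fun gsum :: "sgame list \<Rightarrow> sgame" where
  "gsum [] = num 0"
| "gsum (x # xs) = gplus x (gsum xs)"

lemma gmult_eq_gsum: "gmult n G = gsum (replicate n G)"
  by (induction n) auto

lemma gsum_update:
  "i < length xs \<Longrightarrow> gsum (xs[i := y]) = gplus y (gsum (xs[i := num 0]))"
proof (induction xs arbitrary: i)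
  case (Cons z zs)
  have "gplus z (gplus y R) = gplus y (gplus z R)" for R
    by (metis gplus_assoc gplus_comm)
  with Cons show ?case
    by (cases i) (auto simp: gplus_num)
qed simp

lemma gsum_update_shift:
  "i < length xs \<Longrightarrow> gsum (xs[i := shift c y]) = shift c (gsum (xs[i := y]))"
  using gsum_update[of i xs "shift c y"] gsum_update[of i xs y] by (simp add: gplus_shift)

lemma dicotic_game_gsum: "\<forall>x\<in>set xs. dicotic_game x \<Longrightarrow> dicotic_game (gsum xs)"
  by (induction xs) (auto intro: dicotic_game_gplus dicotic_numI)

lemma nz_game_gsum: "\<forall>x\<in>set xs. nz_game x \<Longrightarrow> nz_game (gsum xs)"
  by (induction xs) (auto intro: nz_game_gplus nz_numI)

lemma gsum_numbers:
  "\<forall>x\<in>set xs. is_number x \<Longrightarrow> gsum xs = num (sum_list (map Ls xs))"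
proof (induction xs)
  case (Cons x xs)
  then obtain s where "x = num s"
    by (auto simp: is_number_def)
  with Cons show ?case
    by (simp add: gplus_num add.commute)
qed simp

lemma is_number_gsum:
  "\<forall>x\<in>set xs. dicotic_game x \<Longrightarrow> is_number (gsum xs) \<longleftrightarrow> (\<forall>x\<in>set xs. is_number x)"
  by (induction xs) (auto simp: is_number_gplus dicotic_game_gsum)

lemma lopts_gsum:
  "z |\<in>| lopts (gsum xs) \<longleftrightarrow> (\<exists>i<length xs. \<exists>y. y |\<in>| lopts (xs ! i) \<and> z = gsum (xs[i := y]))"
proof (induction xs arbitrary: z)
  case (Cons x xs)
  have "z |\<in>| lopts (gsum (x # xs)) \<longleftrightarrow>
        (\<exists>y. y |\<in>| lopts x \<and> z = gplus y (gsum xs)) \<or> (\<exists>w. w |\<in>| lopts (gsum xs) \<and> z = gplus x w)"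
    by (auto simp: lopts_gplus)
  also have "\<dots> \<longleftrightarrow> (\<exists>i<length (x # xs). \<exists>y. y |\<in>| lopts ((x # xs) ! i) \<and> z = gsum ((x # xs)[i := y]))"
    unfolding Cons.IH by (auto simp: Ex_less_Suc2)
  finally show ?case .
qed simp

lemma ropts_gsum:
  "z |\<in>| ropts (gsum xs) \<longleftrightarrow> (\<exists>i<length xs. \<exists>y. y |\<in>| ropts (xs ! i) \<and> z = gsum (xs[i := y]))"
proof (induction xs arbitrary: z)
  case (Cons x xs)
  have "z |\<in>| ropts (gsum (x # xs)) \<longleftrightarrow>
        (\<exists>y. y |\<in>| ropts x \<and> z = gplus y (gsum xs)) \<or> (\<exists>w. w |\<in>| ropts (gsum xs) \<and> z = gplus x w)"
    by (auto simp: ropts_gplus)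
  also have "\<dots> \<longleftrightarrow> (\<exists>i<length (x # xs). \<exists>y. y |\<in>| ropts ((x # xs) ! i) \<and> z = gsum ((x # xs)[i := y]))"
    unfolding Cons.IH by (auto simp: Ex_less_Suc2)
  finally show ?case .
qed simp

lemma Rs_gsum_ge: "\<forall>x\<in>set xs. nz_game x \<Longrightarrow> sum_list (map Rs xs) \<le> Rs (gsum xs)"
proof (induction xs)
  case (Cons x xs)
  then show ?case
    using Rs_gplus_ge[of x "gsum xs"] nz_game_gsum[of xs] by fastforce
qed simp

lemma Ls_gsum_le: "\<forall>x\<in>set xs. nz_game x \<Longrightarrow> Ls (gsum xs) \<le> sum_list (map Ls xs)"
proof (induction xs)
  case (Cons x xs)
  then show ?case
    using Ls_gplus_le[of x "gsum xs"] nz_game_gsum[of xs] by fastforce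
qed simp

section \<open>Cooling\<close>

lemma cool_num [simp]: "cool (num s) t = num s"
  by (simp add: num_def Let_def is_number_def)

lemma cool_SGame: "cool (SGame (Inr A) (Inr B)) t =
  (if t \<le> temp (SGame (Inr A) (Inr B)) then cool_tilde (SGame (Inr A) (Inr B)) t
   else num (Ls (cool_tilde (SGame (Inr A) (Inr B)) (temp (SGame (Inr A) (Inr B))))))"
  by (simp add: Let_def cool_tilde_def temp_def fset.map_comp o_def)

declare cool.simps [simp del]

lemma temp_SGame: "temp (SGame (Inr A) (Inr B)) =
  Inf {t. 0 \<le> t \<and> Ls (cool_tilde (SGame (Inr A) (Inr B)) t) = Rs (cool_tilde (SGame (Inr A) (Inr B)) t)}"
  by (simp add: temp_def)

lemma cool_tilde_SGame: "cool_tilde (SGame (Inr A) (Inr B)) t =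
  SGame (Inr ((\<lambda>a. shift (- t) (cool a t)) |`| A)) (Inr ((\<lambda>b. shift t (cool b t)) |`| B))"
  by (simp add: cool_tilde_def)

lemma lopts_cool_tilde: "lopts (cool_tilde G t) = (\<lambda>a. shift (- t) (cool a t)) |`| lopts G"
  by (cases G; rename_tac l r; case_tac l) (simp_all add: cool_tilde_def lopts_def opts_def)

lemma ropts_cool_tilde: "ropts (cool_tilde G t) = (\<lambda>b. shift t (cool b t)) |`| ropts G"
  by (cases G; rename_tac l r; case_tac r) (simp_all add: cool_tilde_def ropts_def opts_def)

lemma slopes_min:
  fixes \<phi> :: "real \<Rightarrow> real"
  shows "antimono \<phi> \<Longrightarrow> antimono (\<lambda>t. \<phi> (min t c))"
    and "mono (\<lambda>t. \<phi> t + t) \<Longrightarrow> mono (\<lambda>t. \<phi> (min t c) + t)"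
    and "mono \<phi> \<Longrightarrow> mono (\<lambda>t. \<phi> (min t c))"
    and "antimono (\<lambda>t. \<phi> t - t) \<Longrightarrow> antimono (\<lambda>t. \<phi> (min t c) - t)"
  unfolding mono_def antimono_def min_def
  by (smt (verit))+

definition regular_cooling :: "sgame \<Rightarrow> bool" where
  "regular_cooling G \<longleftrightarrow> cool G 0 = G \<and> (\<forall>t. dicotic_game (cool G t)) \<and> (\<forall>t\<ge>0. nz_game (cool G t)) \<and>
     antimono (\<lambda>t. Ls (cool G t)) \<and> mono (\<lambda>t. Ls (cool G t) + t) \<and>
     mono (\<lambda>t. Rs (cool G t)) \<and> antimono (\<lambda>t. Rs (cool G t) - t) \<and>
     (\<forall>\<^sub>F t in at_top. is_number (cool G t))"

lemma regular_cooling_num: "regular_cooling (num s)"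
  by (simp add: regular_cooling_def monoI antimonoI dicotic_numI nz_numI)

lemma regular_cooling_eventually_bounds:
  assumes "regular_cooling G" "\<And>s. T \<le> s \<Longrightarrow> is_number (cool G s)"
  shows "Rs (cool G t) \<le> Rs (cool G T)" "Ls (cool G T) \<le> Ls (cool G t)"
proof -
  have Ls_eq_Rs: "Ls (cool G s) = Rs (cool G s)" if "T \<le> s" for s
    using assms(2)[OF that] by (auto simp: is_number_def)
  have "Rs (cool G t) \<le> Rs (cool G T) \<and> Ls (cool G T) \<le> Ls (cool G t)"
  proof (cases "t \<le> T")
    case True
    then show ?thesis
      using assms(1) by (auto simp: regular_cooling_def dest: monoD antimonoD)
  next
    case False
    then show ?thesis
      using assms(1) Ls_eq_Rs[of t] Ls_eq_Rs[of T]
      by (auto simp: regular_cooling_def dest: monoD[of _ T t] antimonoD[of _ T t])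
  qed
  then show "Rs (cool G t) \<le> Rs (cool G T)" "Ls (cool G T) \<le> Ls (cool G t)"
    by auto
qed

context
  fixes A B :: "sgame fset"
  assumes A_ne: "A \<noteq> {||}" and B_ne: "B \<noteq> {||}"
    and regular_opts: "\<And>x. x |\<in>| A |\<union>| B \<Longrightarrow> regular_cooling x"
begin

lemma dicotic_game_cool_opts: "x |\<in>| A |\<union>| B \<Longrightarrow> dicotic_game (cool x t)"
  using regular_opts by (simp add: regular_cooling_def)

lemma scores_cool_tilde_SGame:
  "Ls (cool_tilde (SGame (Inr A) (Inr B)) t) = Max ((\<lambda>a. Rs (cool a t) - t) ` fset A)"
  "Rs (cool_tilde (SGame (Inr A) (Inr B)) t) = Min ((\<lambda>b. Ls (cool b t) + t) ` fset B)"
  unfolding cool_tilde_SGame Ls_SGame Rs_SGame fimage.rep_eq image_image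
  by (auto intro!: arg_cong[where f = Max] arg_cong[where f = Min] image_cong
           simp: Rs_shift Ls_shift dicotic_game_cool_opts)

lemma shifted_scores_cool_tilde_SGame:
  "Ls (cool_tilde (SGame (Inr A) (Inr B)) t) + t = Max ((\<lambda>a. Rs (cool a t)) ` fset A)"
  "Rs (cool_tilde (SGame (Inr A) (Inr B)) t) - t = Min ((\<lambda>b. Ls (cool b t)) ` fset B)"
proof -
  have "fset A \<noteq> {}" "fset B \<noteq> {}"
    using A_ne B_ne by auto
  then show "Ls (cool_tilde (SGame (Inr A) (Inr B)) t) + t = Max ((\<lambda>a. Rs (cool a t)) ` fset A)"
    "Rs (cool_tilde (SGame (Inr A) (Inr B)) t) - t = Min ((\<lambda>b. Ls (cool b t)) ` fset B)"
    using Max_add_commute[of "fset A" "\<lambda>a. Rs (cool a t) - t" t]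
      Min_add_commute[of "fset B" "\<lambda>b. Ls (cool b t) + t" "- t"]
    by (simp_all add: scores_cool_tilde_SGame)
qed

lemma slopes_cool_tilde_SGame:
  "antimono (\<lambda>t. Ls (cool_tilde (SGame (Inr A) (Inr B)) t))"
  "mono (\<lambda>t. Ls (cool_tilde (SGame (Inr A) (Inr B)) t) + t)"
  "mono (\<lambda>t. Rs (cool_tilde (SGame (Inr A) (Inr B)) t))"
  "antimono (\<lambda>t. Rs (cool_tilde (SGame (Inr A) (Inr B)) t) - t)"
proof -
  have "antimono (\<lambda>t. Rs (cool x t) - t)" "mono (\<lambda>t. Rs (cool x t))"
       "mono (\<lambda>t. Ls (cool x t) + t)" "antimono (\<lambda>t. Ls (cool x t))" if "x |\<in>| A |\<union>| B" for x
    using regular_opts[OF that] by (simp_all add: regular_cooling_def)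
  then show "antimono (\<lambda>t. Ls (cool_tilde (SGame (Inr A) (Inr B)) t))"
    "mono (\<lambda>t. Ls (cool_tilde (SGame (Inr A) (Inr B)) t) + t)"
    "mono (\<lambda>t. Rs (cool_tilde (SGame (Inr A) (Inr B)) t))"
    "antimono (\<lambda>t. Rs (cool_tilde (SGame (Inr A) (Inr B)) t) - t)"
    unfolding shifted_scores_cool_tilde_SGame
    by (auto simp only: scores_cool_tilde_SGame finite_fset
        intro!: mono_Max_image antimono_Max_image mono_Min_image antimono_Min_image)
qed

lemma cool_tilde_SGame_0: "cool_tilde (SGame (Inr A) (Inr B)) 0 = SGame (Inr A) (Inr B)"
  using regular_opts by (auto simp: cool_tilde_SGame regular_cooling_def intro!: fset.map_ident_strong)

lemma cool_tilde_SGame_eventually_zugzwang: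
  obtains T where "0 \<le> T" "Ls (cool_tilde (SGame (Inr A) (Inr B)) T) < Rs (cool_tilde (SGame (Inr A) (Inr B)) T)"
proof -
  let ?L = "\<lambda>t. Ls (cool_tilde (SGame (Inr A) (Inr B)) t)"
  let ?R = "\<lambda>t. Rs (cool_tilde (SGame (Inr A) (Inr B)) t)"
  have "\<forall>\<^sub>F t in at_top. \<forall>x\<in>fset (A |\<union>| B). is_number (cool x t)"
    using regular_opts by (intro eventually_ball_finite) (auto simp: regular_cooling_def)
  then obtain T0 where T0: "\<And>x s. x |\<in>| A |\<union>| B \<Longrightarrow> T0 \<le> s \<Longrightarrow> is_number (cool x s)"
    by (auto simp: eventually_at_top_linorder)
  define T1 where "T1 = max T0 0"
  have bounds: "Rs (cool x t) \<le> Rs (cool x T1)" "Ls (cool x T1) \<le> Ls (cool x t)"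
    if "x |\<in>| A |\<union>| B" for x t
    using regular_cooling_eventually_bounds[OF regular_opts[OF that], of T1] T0[OF that]
    by (auto simp: T1_def)
  define T where "T = T1 + \<bar>?L T1 - ?R T1\<bar> + 1"
  have "?L T + T \<le> ?L T1 + T1" "?R T1 - T1 \<le> ?R T - T"
    unfolding shifted_scores_cool_tilde_SGame
    using bounds by (auto intro!: Max_image_le_Max_image Min_image_le_Min_image)
  moreover have "?L T1 - ?R T1 \<le> \<bar>?L T1 - ?R T1\<bar>"
    by simp
  ultimately have "?L T < ?R T"
    using T_def by linarith
  moreover have "0 \<le> T"
    by (simp add: T_def T1_def)
  ultimately show ?thesis
    using that by blast
qed

lemma
  assumes "nz_game (SGame (Inr A) (Inr B))"
  shows temp_SGame_nonneg: "0 \<le> temp (SGame (Inr A) (Inr B))"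
    and Ls_cool_tilde_temp_SGame: "Ls (cool_tilde (SGame (Inr A) (Inr B)) (temp (SGame (Inr A) (Inr B))))
       = Rs (cool_tilde (SGame (Inr A) (Inr B)) (temp (SGame (Inr A) (Inr B))))"
    and Rs_le_Ls_cool_tilde_SGame: "t \<le> temp (SGame (Inr A) (Inr B))
       \<Longrightarrow> Rs (cool_tilde (SGame (Inr A) (Inr B)) t) \<le> Ls (cool_tilde (SGame (Inr A) (Inr B)) t)"
proof -
  define d where "d t = Ls (cool_tilde (SGame (Inr A) (Inr B)) t) - Rs (cool_tilde (SGame (Inr A) (Inr B)) t)" for t
  have temp_eq: "temp (SGame (Inr A) (Inr B)) = Inf {t. 0 \<le> t \<and> d t = 0}"
    by (simp add: temp_SGame d_def)
  have d_antimono: "antimono d"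
    using slopes_cool_tilde_SGame(1,3) unfolding d_def
    by (intro antimonoI) (smt (verit) antimonoD monoD)
  have "mono (\<lambda>t. d t + 2 * t)"
    using slopes_cool_tilde_SGame(2,4) unfolding d_def
    by (intro monoI) (smt (verit) antimonoD monoD)
  then have "continuous_on {0..} d"
    using d_antimono by (intro continuous_on_antimono_bounded_slope) auto
  moreover have "0 \<le> d 0"
    using nz_game_Rs_le_Ls[OF assms] by (simp add: d_def cool_tilde_SGame_0)
  moreover obtain T where "0 \<le> T" "d T \<le> 0"
    using cool_tilde_SGame_eventually_zugzwang unfolding d_def by (smt (verit))
  ultimately have temp: "0 \<le> temp (SGame (Inr A) (Inr B))" "d (temp (SGame (Inr A) (Inr B))) = 0"
    unfolding temp_eq by (auto dest: Inf_zeros_mem)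
  then show "0 \<le> temp (SGame (Inr A) (Inr B))"
    "Ls (cool_tilde (SGame (Inr A) (Inr B)) (temp (SGame (Inr A) (Inr B))))
       = Rs (cool_tilde (SGame (Inr A) (Inr B)) (temp (SGame (Inr A) (Inr B))))"
    by (simp_all add: d_def)
  show "Rs (cool_tilde (SGame (Inr A) (Inr B)) t) \<le> Ls (cool_tilde (SGame (Inr A) (Inr B)) t)"
    if "t \<le> temp (SGame (Inr A) (Inr B))"
    using antimonoD[OF d_antimono that] temp by (simp add: d_def)
qed

lemma regular_cooling_SGame:
  assumes nz: "nz_game (SGame (Inr A) (Inr B))"
  shows "regular_cooling (SGame (Inr A) (Inr B))"
proof -
  let ?G = "SGame (Inr A) (Inr B)"
  let ?\<tau> = "temp ?G"
  have cool_eq: "cool ?G t = (if t \<le> ?\<tau> then cool_tilde ?G t else num (Ls (cool_tilde ?G ?\<tau>)))" for t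
    by (rule cool_SGame)
  have Ls_cool: "Ls (cool ?G t) = Ls (cool_tilde ?G (min t ?\<tau>))"
    and Rs_cool: "Rs (cool ?G t) = Rs (cool_tilde ?G (min t ?\<tau>))" for t
    using Ls_cool_tilde_temp_SGame[OF nz] by (simp_all add: cool_eq min_def)
  have "dicotic_game (cool_tilde ?G t)" for t
    unfolding cool_tilde_SGame using A_ne B_ne
    by (intro dicotic_gameI) (auto intro!: dicotic_game_shift dicotic_game_cool_opts)
  moreover have "nz_game (cool_tilde ?G t)" if "0 \<le> t" "t \<le> ?\<tau>" for t
  proof -
    have "nz_game (cool x t)" if "x |\<in>| A |\<union>| B" for x
      using regular_opts[OF that] \<open>0 \<le> t\<close> by (simp add: regular_cooling_def)
    then show ?thesis
      using Rs_le_Ls_cool_tilde_SGame[OF nz \<open>t \<le> ?\<tau>\<close>] A_ne B_ne unfolding cool_tilde_SGame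
      by (intro nz_gameI) (auto intro!: nz_game_shift simp flip: cool_tilde_SGame)
  qed
  moreover have "\<forall>\<^sub>F t in at_top. is_number (cool ?G t)"
    using eventually_gt_at_top[of ?\<tau>] by eventually_elim (simp add: cool_eq)
  moreover note slopes_min(1)[OF slopes_cool_tilde_SGame(1)] slopes_min(2)[OF slopes_cool_tilde_SGame(2)]
    slopes_min(3)[OF slopes_cool_tilde_SGame(3)] slopes_min(4)[OF slopes_cool_tilde_SGame(4)]
  ultimately show ?thesis
    unfolding regular_cooling_def Ls_cool Rs_cool
    using temp_SGame_nonneg[OF nz]
    by (simp add: cool_eq cool_tilde_SGame_0 dicotic_numI nz_numI)
qed

end

lemma nz_game_regular_cooling: "nz_game G \<Longrightarrow> regular_cooling G"
proof (induction rule: nz_game.induct)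
  case (nz_gameI A B)
  then show ?case
    by (intro regular_cooling_SGame) (auto intro: nz_game.nz_gameI)
qed (rule regular_cooling_num)

lemma temp_num [simp]: "temp (num s) = 0"
  by (simp add: temp_def)

lemma is_number_cool:
  assumes "dicotic_game G"
  shows "is_number (cool G t) \<longleftrightarrow> is_number G \<or> temp G < t"
proof (cases "is_number G")
  case True
  then show ?thesis by (auto simp: is_number_def)
next
  case False
  with assms obtain A B where "G = SGame (Inr A) (Inr B)"
    by (rule dicotic_game_nonnumberE)
  then show ?thesis
    by (simp add: cool_SGame cool_tilde_SGame)
qed

lemma lopts_cool:
  "dicotic_game G \<Longrightarrow> lopts (cool G t) = (if t \<le> temp G then (\<lambda>a. shift (- t) (cool a t)) |`| lopts G else {||})"
  by (cases "is_number G")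
    (auto elim!: dicotic_game_nonnumberE simp: is_number_def cool_SGame lopts_cool_tilde)

lemma ropts_cool:
  "dicotic_game G \<Longrightarrow> ropts (cool G t) = (if t \<le> temp G then (\<lambda>b. shift t (cool b t)) |`| ropts G else {||})"
  by (cases "is_number G")
    (auto elim!: dicotic_game_nonnumberE simp: is_number_def cool_SGame ropts_cool_tilde)

lemma cool_0: "nz_game G \<Longrightarrow> cool G 0 = G"
  and dicotic_game_cool: "nz_game G \<Longrightarrow> dicotic_game (cool G t)"
  and nz_game_cool: "nz_game G \<Longrightarrow> 0 \<le> t \<Longrightarrow> nz_game (cool G t)"
  using nz_game_regular_cooling by (simp_all add: regular_cooling_def)

lemma
  assumes "nz_game G" "s \<le> t"
  shows Ls_cool_antimono: "Ls (cool G t) \<le> Ls (cool G s)"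
    and Ls_cool_slope: "Ls (cool G s) \<le> Ls (cool G t) + (t - s)"
    and Rs_cool_mono: "Rs (cool G s) \<le> Rs (cool G t)"
    and Rs_cool_slope: "Rs (cool G t) \<le> Rs (cool G s) + (t - s)"
  using nz_game_regular_cooling[OF assms(1)] assms(2)
  by (auto simp: regular_cooling_def dest: monoD[of _ s t] antimonoD[of _ s t])

lemma temp_nonneg:
  assumes "nz_game G"
  shows "0 \<le> temp G"
  using assms
proof cases
  case (nz_gameI A B)
  with assms show ?thesis
    by (auto intro!: temp_SGame_nonneg nz_game_regular_cooling)
qed simp

lemma Rs_eq_Ls_cool_temp:
  assumes "nz_game G"
  shows "Rs (cool G (temp G)) = Ls (cool G (temp G))"
  using assms
proof cases
  case (nz_gameI A B)
  with assms show ?thesis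
    by (auto simp: cool_SGame intro!: Ls_cool_tilde_temp_SGame[symmetric] nz_game_regular_cooling)
qed simp

lemma cool_above_temp: "nz_game G \<Longrightarrow> temp G < t \<Longrightarrow> cool G t = num (Ls (cool G (temp G)))"
  by (cases rule: nz_game.cases) (auto simp: cool_SGame)

lemma scores_cool_settled:
  assumes "nz_game G" "temp G \<le> t"
  shows "Ls (cool G t) = Ls (cool G (temp G))" "Rs (cool G t) = Ls (cool G (temp G))"
  using assms Rs_eq_Ls_cool_temp cool_above_temp[of G t] by (cases "t = temp G"; simp)+

lemma Rs_cool_lopt_le:
  assumes "nz_game G" "a |\<in>| lopts G" "t \<le> temp G"
  shows "Rs (cool a t) - t \<le> Ls (cool G t)"
proof -
  have "shift (- t) (cool a t) |\<in>| lopts (cool G t)"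
    using assms nz_game_dicotic by (simp add: lopts_cool)
  then have "Rs (shift (- t) (cool a t)) \<le> Ls (cool G t)"
    by (rule Rs_lopt_le_Ls[OF dicotic_game_cool[OF assms(1)]])
  then show ?thesis
    using nz_game_opts(1)[OF assms(1,2)] by (simp add: Rs_shift dicotic_game_cool)
qed

lemma Rs_cool_le_ropt:
  assumes "nz_game G" "b |\<in>| ropts G" "t \<le> temp G"
  shows "Rs (cool G t) \<le> Ls (cool b t) + t"
proof -
  have "shift t (cool b t) |\<in>| ropts (cool G t)"
    using assms nz_game_dicotic by (simp add: ropts_cool)
  then have "Rs (cool G t) \<le> Ls (shift t (cool b t))"
    by (rule Rs_le_Ls_ropt[OF dicotic_game_cool[OF assms(1)]])
  then show ?thesis
    using nz_game_opts(2)[OF assms(1,2)] by (simp add: Ls_shift dicotic_game_cool)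
qed

section \<open>Cooling finite sums\<close>

(* Up to sigma(G), a_t - t is a Left option of G_t; beyond it, G_t is the number Ls G_sigma,
   and a_sigma - sigma is a Left option of G_sigma. Dually for Right options. *)
lemma Rs_gplus_cool_lopt_le:
  assumes G: "nz_game G" and a: "a |\<in>| lopts G" and R: "nz_game R" and t: "0 \<le> t"
  shows "Rs (gplus (cool a t) R) \<le> Ls (gplus (cool G t) R) + t"
proof (cases "t \<le> temp G")
  case True
  have dGR: "dicotic_game (gplus (cool G t) R)"
    and daR: "dicotic_game (gplus (cool a t) R)"
    using G R nz_game_opts(1)[OF G a]
    by (auto intro: dicotic_game_gplus dicotic_game_cool nz_game_dicotic)
  have "shift (- t) (cool a t) |\<in>| lopts (cool G t)"
    using True a nz_game_dicotic[OF G] by (simp add: lopts_cool)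
  then have "gplus (shift (- t) (cool a t)) R |\<in>| lopts (gplus (cool G t) R)"
    by (simp add: lopts_gplus)
  from Rs_lopt_le_Ls[OF dGR this] show ?thesis
    by (simp add: gplus_shift Rs_shift daR)
next
  case False
  let ?\<tau> = "temp G"
  have nz_a: "nz_game a"
    using nz_game_opts(1)[OF G a] .
  have "Rs (gplus (cool a t) R) \<le> Rs (cool a t) + Ls R"
    using Rs_gplus_le[OF nz_game_cool[OF nz_a t] R] .
  also have "\<dots> \<le> Rs (cool a ?\<tau>) + (t - ?\<tau>) + Ls R"
    using Rs_cool_slope[OF nz_a, of ?\<tau> t] False by simp
  also have "\<dots> \<le> Ls (cool G ?\<tau>) + t + Ls R"
    using Rs_cool_lopt_le[OF G a order_refl] by simp
  also have "\<dots> = Ls (gplus (cool G t) R) + t"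
    using cool_above_temp[OF G, of t] False R
    by (simp add: gplus_num Ls_shift nz_game_dicotic)
  finally show ?thesis .
qed

lemma Rs_gplus_cool_le_ropt:
  assumes G: "nz_game G" and b: "b |\<in>| ropts G" and R: "nz_game R" and t: "0 \<le> t"
  shows "Rs (gplus (cool G t) R) - t \<le> Ls (gplus (cool b t) R)"
proof (cases "t \<le> temp G")
  case True
  have dGR: "dicotic_game (gplus (cool G t) R)"
    and dbR: "dicotic_game (gplus (cool b t) R)"
    using G R nz_game_opts(2)[OF G b]
    by (auto intro: dicotic_game_gplus dicotic_game_cool nz_game_dicotic)
  have "shift t (cool b t) |\<in>| ropts (cool G t)"
    using True b nz_game_dicotic[OF G] by (simp add: ropts_cool)
  then have "gplus (shift t (cool b t)) R |\<in>| ropts (gplus (cool G t) R)"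
    by (simp add: ropts_gplus)
  from Rs_le_Ls_ropt[OF dGR this] show ?thesis
    by (simp add: gplus_shift Ls_shift dbR)
next
  case False
  let ?\<tau> = "temp G"
  have nz_b: "nz_game b"
    using nz_game_opts(2)[OF G b] .
  have "Rs (gplus (cool G t) R) - t = Rs (cool G ?\<tau>) + Rs R - t"
    using cool_above_temp[OF G, of t] False R Rs_eq_Ls_cool_temp[OF G]
    by (simp add: gplus_num Rs_shift nz_game_dicotic)
  also have "\<dots> \<le> Ls (cool b ?\<tau>) + ?\<tau> + Rs R - t"
    using Rs_cool_le_ropt[OF G b order_refl] by simp
  also have "\<dots> \<le> Ls (cool b t) + Rs R"
    using Ls_cool_slope[OF nz_b, of ?\<tau> t] False by simp
  also have "\<dots> \<le> Ls (gplus (cool b t) R)"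
    using Ls_gplus_ge[OF nz_game_cool[OF nz_b t] R] .
  finally show ?thesis .
qed

lemma dicotic_game_cooled_gsum: "\<forall>x\<in>set xs. nz_game x \<Longrightarrow> dicotic_game (gsum (map (\<lambda>x. cool x t) xs))"
  by (auto intro!: dicotic_game_gsum dicotic_game_cool)

lemma nz_game_cooled_gsum: "\<forall>x\<in>set xs. nz_game x \<Longrightarrow> 0 \<le> t \<Longrightarrow> nz_game (gsum (map (\<lambda>x. cool x t) xs))"
  by (auto intro!: nz_game_gsum nz_game_cool)

lemma nz_game_list_update: "\<forall>x\<in>set xs. nz_game x \<Longrightarrow> nz_game a \<Longrightarrow> \<forall>x\<in>set (xs[i := a]). nz_game x"
  using set_update_subset_insert by fastforce

lemma gsum_map_cool_update:
  "i < length xs \<Longrightarrow> gsum (map (\<lambda>x. cool x t) (xs[i := a]))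
     = gplus (cool a t) (gsum ((map (\<lambda>x. cool x t) xs)[i := num 0]))"
  using gsum_update[of i "map (\<lambda>x. cool x t) xs" "cool a t"] by (simp add: map_update)

lemma lopts_cooled_gsumE:
  assumes "\<forall>x\<in>set xs. dicotic_game x" "z |\<in>| lopts (gsum (map (\<lambda>x. cool x t) xs))"
  obtains i a where "i < length xs" "a |\<in>| lopts (xs ! i)"
    "z = shift (- t) (gsum (map (\<lambda>x. cool x t) (xs[i := a])))"
proof -
  from assms(2) obtain i y where i: "i < length xs" and y: "y |\<in>| lopts (cool (xs ! i) t)"
    and z: "z = gsum ((map (\<lambda>x. cool x t) xs)[i := y])"
    by (auto simp: lopts_gsum)
  from y obtain a where "a |\<in>| lopts (xs ! i)" "y = shift (- t) (cool a t)"
    using assms(1) i by (auto simp: lopts_cool split: if_splits)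
  with i z show ?thesis
    by (intro that) (simp_all add: gsum_update_shift map_update)
qed

lemma ropts_cooled_gsumE:
  assumes "\<forall>x\<in>set xs. dicotic_game x" "z |\<in>| ropts (gsum (map (\<lambda>x. cool x t) xs))"
  obtains i b where "i < length xs" "b |\<in>| ropts (xs ! i)"
    "z = shift t (gsum (map (\<lambda>x. cool x t) (xs[i := b])))"
proof -
  from assms(2) obtain i y where i: "i < length xs" and y: "y |\<in>| ropts (cool (xs ! i) t)"
    and z: "z = gsum ((map (\<lambda>x. cool x t) xs)[i := y])"
    by (auto simp: ropts_gsum)
  from y obtain b where "b |\<in>| ropts (xs ! i)" "y = shift t (cool b t)"
    using assms(1) i by (auto simp: ropts_cool split: if_splits)
  with i z show ?thesis
    by (intro that) (simp_all add: gsum_update_shift map_update)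
qed

lemma Ls_cooled_gsum_le_of_nonnumber:
  assumes nz: "\<forall>x\<in>set xs. nz_game x"
    and nonnumber: "\<not> is_number (gsum (map (\<lambda>x. cool x t) xs))"
    and IH: "\<And>i a. i < length xs \<Longrightarrow> a |\<in>| lopts (xs ! i) \<Longrightarrow>
      Rs (gsum (map (\<lambda>x. cool x t) (xs[i := a]))) - t \<le> Rs (gsum (xs[i := a]))"
  shows "Ls (gsum (map (\<lambda>x. cool x t) xs)) \<le> Ls (gsum xs)"
proof (rule Ls_leI[OF dicotic_game_cooled_gsum[OF nz] nonnumber])
  fix z
  assume "z |\<in>| lopts (gsum (map (\<lambda>x. cool x t) xs))"
  then obtain i a where i: "i < length xs" and a: "a |\<in>| lopts (xs ! i)"
    and z: "z = shift (- t) (gsum (map (\<lambda>x. cool x t) (xs[i := a])))"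
    using nz nz_game_dicotic by (metis lopts_cooled_gsumE)
  have nz_update: "\<forall>x\<in>set (xs[i := a]). nz_game x"
    using nz a i by (intro nz_game_list_update) (auto intro: nz_game_opts)
  have "Rs z = Rs (gsum (map (\<lambda>x. cool x t) (xs[i := a]))) - t"
    using z dicotic_game_cooled_gsum[OF nz_update] by (simp add: Rs_shift)
  also have "\<dots> \<le> Rs (gsum (xs[i := a]))"
    using IH[OF i a] .
  also have "\<dots> \<le> Ls (gsum xs)"
    using nz i a nz_game_dicotic[OF nz_game_gsum] by (intro Rs_lopt_le_Ls) (auto simp: lopts_gsum)
  finally show "Rs z \<le> Ls (gsum xs)" .
qed

lemma Rs_gsum_le_cooled_of_nonnumber:
  assumes nz: "\<forall>x\<in>set xs. nz_game x"
    and nonnumber: "\<not> is_number (gsum (map (\<lambda>x. cool x t) xs))"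
    and IH: "\<And>i b. i < length xs \<Longrightarrow> b |\<in>| ropts (xs ! i) \<Longrightarrow>
      Ls (gsum (xs[i := b])) \<le> Ls (gsum (map (\<lambda>x. cool x t) (xs[i := b]))) + t"
  shows "Rs (gsum xs) \<le> Rs (gsum (map (\<lambda>x. cool x t) xs))"
proof (rule Rs_geI[OF dicotic_game_cooled_gsum[OF nz] nonnumber])
  fix z
  assume "z |\<in>| ropts (gsum (map (\<lambda>x. cool x t) xs))"
  then obtain i b where i: "i < length xs" and b: "b |\<in>| ropts (xs ! i)"
    and z: "z = shift t (gsum (map (\<lambda>x. cool x t) (xs[i := b])))"
    using nz nz_game_dicotic by (metis ropts_cooled_gsumE)
  have nz_update: "\<forall>x\<in>set (xs[i := b]). nz_game x"
    using nz b i by (intro nz_game_list_update) (auto intro: nz_game_opts)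
  have "Rs (gsum xs) \<le> Ls (gsum (xs[i := b]))"
    using nz i b nz_game_dicotic[OF nz_game_gsum] by (intro Rs_le_Ls_ropt) (auto simp: ropts_gsum)
  also have "\<dots> \<le> Ls (gsum (map (\<lambda>x. cool x t) (xs[i := b]))) + t"
    using IH[OF i b] .
  also have "\<dots> = Ls z"
    using z dicotic_game_cooled_gsum[OF nz_update] by (simp add: Ls_shift)
  finally show "Rs (gsum xs) \<le> Ls z" .
qed

lemma frozen_cooled_gsum:
  assumes nz: "\<forall>x\<in>set xs. nz_game x"
    and number: "is_number (gsum (map (\<lambda>x. cool x t) xs))"
    and nonnumber: "\<exists>x\<in>set xs. \<not> is_number x"
  obtains \<tau> where "0 \<le> \<tau>" "\<not> is_number (gsum (map (\<lambda>x. cool x \<tau>) xs))"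
    "Ls (gsum (map (\<lambda>x. cool x t) xs)) = sum_list (map (\<lambda>x. Rs (cool x \<tau>)) xs)"
    "Rs (gsum (map (\<lambda>x. cool x t) xs)) = sum_list (map (\<lambda>x. Ls (cool x \<tau>)) xs)"
proof -
  \<comment> \<open>At the largest temperature of a component, that component is not yet a number, while
    every component already has its final scores.\<close>
  define N where "N = {x \<in> set xs. \<not> is_number x}"
  define \<tau> where "\<tau> = Max (temp ` N)"
  have N: "finite N" "N \<noteq> {}"
    using nonnumber by (auto simp: N_def)
  then obtain x0 where x0: "x0 \<in> N" "temp x0 = \<tau>"
    unfolding \<tau>_def by (metis (mono_tags, lifting) Max_in finite_imageI image_iff image_is_empty)
  have dicotic_cooled: "\<forall>y\<in>set (map (\<lambda>x. cool x s) xs). dicotic_game y" for s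
    using nz by (auto intro: dicotic_game_cool)
  have "is_number (cool x0 t)"
    using x0 number is_number_gsum[of "map (\<lambda>x. cool x t) xs", OF dicotic_cooled]
    by (auto simp: N_def)
  then have "\<tau> < t"
    using x0 nz by (auto simp: N_def is_number_cool nz_game_dicotic)
  have "\<not> is_number (cool x0 \<tau>)"
    using x0 nz by (auto simp: N_def is_number_cool nz_game_dicotic)
  then have x0_hot: "\<not> is_number (gsum (map (\<lambda>x. cool x \<tau>) xs))"
    using x0 is_number_gsum[of "map (\<lambda>x. cool x \<tau>) xs", OF dicotic_cooled] by (auto simp: N_def)
  have "0 \<le> \<tau>"
    using x0 nz temp_nonneg by (auto simp: N_def)
  have "temp x \<le> \<tau>" if "x \<in> set xs" for x
    using that N \<open>0 \<le> \<tau>\<close> by (cases "is_number x") (auto simp: is_number_def \<tau>_def N_def)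
  then have settled: "Ls (cool x \<tau>) = Ls (cool x t) \<and> Rs (cool x \<tau>) = Ls (cool x t)"
    if "x \<in> set xs" for x
    using that nz scores_cool_settled[of x \<tau>] scores_cool_settled[of x t] \<open>\<tau> < t\<close> by force
  have "gsum (map (\<lambda>x. cool x t) xs) = num (sum_list (map (\<lambda>x. Ls (cool x t)) xs))"
    using number is_number_gsum[of "map (\<lambda>x. cool x t) xs", OF dicotic_cooled]
    by (subst gsum_numbers) (auto simp: o_def)
  moreover have "sum_list (map (\<lambda>x. Ls (cool x t)) xs) = sum_list (map (\<lambda>x. Rs (cool x \<tau>)) xs)"
    "sum_list (map (\<lambda>x. Ls (cool x t)) xs) = sum_list (map (\<lambda>x. Ls (cool x \<tau>)) xs)"
    using settled by (auto intro!: arg_cong[where f = sum_list] map_cong)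
  ultimately show ?thesis
    using that \<open>0 \<le> \<tau>\<close> x0_hot by simp
qed

lemma Ls_cooled_gsum_le:
  assumes nz: "\<forall>x\<in>set xs. nz_game x" and t: "0 \<le> t"
    and IH: "\<And>i a s. i < length xs \<Longrightarrow> a |\<in>| lopts (xs ! i) \<Longrightarrow> 0 \<le> s \<Longrightarrow>
      Rs (gsum (map (\<lambda>x. cool x s) (xs[i := a]))) - s \<le> Rs (gsum (xs[i := a]))"
  shows "Ls (gsum (map (\<lambda>x. cool x t) xs)) \<le> Ls (gsum xs)"
proof -
  consider (nonnumber) "\<not> is_number (gsum (map (\<lambda>x. cool x t) xs))"
    | (numbers) "\<forall>x\<in>set xs. is_number x"
    | (frozen) "is_number (gsum (map (\<lambda>x. cool x t) xs))" "\<exists>x\<in>set xs. \<not> is_number x"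
    by blast
  then show ?thesis
  proof cases
    case nonnumber
    with nz t IH show ?thesis
      by (intro Ls_cooled_gsum_le_of_nonnumber) auto
  next
    case numbers
    then have "map (\<lambda>x. cool x t) xs = xs"
      by (intro map_idI) (auto simp: is_number_def)
    then show ?thesis by simp
  next
    case frozen
    then obtain \<tau> where \<tau>: "0 \<le> \<tau>" "\<not> is_number (gsum (map (\<lambda>x. cool x \<tau>) xs))"
      "Ls (gsum (map (\<lambda>x. cool x t) xs)) = sum_list (map (\<lambda>x. Rs (cool x \<tau>)) xs)"
      by (metis frozen_cooled_gsum[OF nz])
    have "Ls (gsum (map (\<lambda>x. cool x t) xs)) = sum_list (map Rs (map (\<lambda>x. cool x \<tau>) xs))"
      using \<tau>(3) by (simp add: o_def)
    also have "\<dots> \<le> Rs (gsum (map (\<lambda>x. cool x \<tau>) xs))"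
      using nz \<tau>(1) by (intro Rs_gsum_ge) (auto intro: nz_game_cool)
    also have "\<dots> \<le> Ls (gsum (map (\<lambda>x. cool x \<tau>) xs))"
      using nz_game_Rs_le_Ls[OF nz_game_cooled_gsum[OF nz \<tau>(1)]] .
    also have "\<dots> \<le> Ls (gsum xs)"
      using nz \<tau> IH by (intro Ls_cooled_gsum_le_of_nonnumber) auto
    finally show ?thesis .
  qed
qed

lemma Rs_gsum_le_cooled:
  assumes nz: "\<forall>x\<in>set xs. nz_game x" and t: "0 \<le> t"
    and IH: "\<And>i b s. i < length xs \<Longrightarrow> b |\<in>| ropts (xs ! i) \<Longrightarrow> 0 \<le> s \<Longrightarrow>
      Ls (gsum (xs[i := b])) \<le> Ls (gsum (map (\<lambda>x. cool x s) (xs[i := b]))) + s"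
  shows "Rs (gsum xs) \<le> Rs (gsum (map (\<lambda>x. cool x t) xs))"
proof -
  consider (nonnumber) "\<not> is_number (gsum (map (\<lambda>x. cool x t) xs))"
    | (numbers) "\<forall>x\<in>set xs. is_number x"
    | (frozen) "is_number (gsum (map (\<lambda>x. cool x t) xs))" "\<exists>x\<in>set xs. \<not> is_number x"
    by blast
  then show ?thesis
  proof cases
    case nonnumber
    with nz t IH show ?thesis
      by (intro Rs_gsum_le_cooled_of_nonnumber) auto
  next
    case numbers
    then have "map (\<lambda>x. cool x t) xs = xs"
      by (intro map_idI) (auto simp: is_number_def)
    then show ?thesis by simp
  next
    case frozen
    then obtain \<tau> where \<tau>: "0 \<le> \<tau>" "\<not> is_number (gsum (map (\<lambda>x. cool x \<tau>) xs))"
      "Rs (gsum (map (\<lambda>x. cool x t) xs)) = sum_list (map (\<lambda>x. Ls (cool x \<tau>)) xs)"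
      by (metis frozen_cooled_gsum[OF nz])
    have "Rs (gsum xs) \<le> Rs (gsum (map (\<lambda>x. cool x \<tau>) xs))"
      using nz \<tau> IH by (intro Rs_gsum_le_cooled_of_nonnumber) auto
    also have "\<dots> \<le> Ls (gsum (map (\<lambda>x. cool x \<tau>) xs))"
      using nz_game_Rs_le_Ls[OF nz_game_cooled_gsum[OF nz \<tau>(1)]] .
    also have "\<dots> \<le> sum_list (map Ls (map (\<lambda>x. cool x \<tau>) xs))"
      using nz \<tau>(1) by (intro Ls_gsum_le) (auto intro: nz_game_cool)
    also have "\<dots> = Rs (gsum (map (\<lambda>x. cool x t) xs))"
      using \<tau>(3) by (simp add: o_def)
    finally show ?thesis .
  qed
qed

lemma Ls_gsum_le_cooled:
  assumes nz: "\<forall>x\<in>set xs. nz_game x" and t: "0 \<le> t"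
    and IH: "\<And>i a. i < length xs \<Longrightarrow> a |\<in>| lopts (xs ! i) \<Longrightarrow>
      Rs (gsum (xs[i := a])) \<le> Rs (gsum (map (\<lambda>x. cool x t) (xs[i := a])))"
  shows "Ls (gsum xs) \<le> Ls (gsum (map (\<lambda>x. cool x t) xs)) + t"
proof (cases "\<forall>x\<in>set xs. is_number x")
  case True
  then have "map (\<lambda>x. cool x t) xs = xs"
    by (intro map_idI) (auto simp: is_number_def)
  with t show ?thesis by simp
next
  case False
  have d: "dicotic_game (gsum xs)"
    using nz by (intro nz_game_dicotic nz_game_gsum) auto
  with False nz have "\<not> is_number (gsum xs)"
    by (simp add: is_number_gsum nz_game_dicotic)
  then show ?thesis
  proof (rule Ls_leI[OF d])
    fix z
    assume "z |\<in>| lopts (gsum xs)"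
    then obtain i a where i: "i < length xs" and a: "a |\<in>| lopts (xs ! i)" and z: "z = gsum (xs[i := a])"
      by (auto simp: lopts_gsum)
    define R where "R = gsum ((map (\<lambda>x. cool x t) xs)[i := num 0])"
    have "nz_game R"
      unfolding R_def using nz t set_update_subset_insert
      by (intro nz_game_gsum) (fastforce intro: nz_game_cool nz_numI)
    have "Rs z \<le> Rs (gplus (cool a t) R)"
      using IH[OF i a] z i by (simp add: gsum_map_cool_update R_def)
    also have "\<dots> \<le> Ls (gplus (cool (xs ! i) t) R) + t"
      using nz i a t \<open>nz_game R\<close> by (intro Rs_gplus_cool_lopt_le) auto
    also have "\<dots> = Ls (gsum (map (\<lambda>x. cool x t) xs)) + t"
      using gsum_map_cool_update[OF i, of t "xs ! i"] by (simp add: R_def)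
    finally show "Rs z \<le> Ls (gsum (map (\<lambda>x. cool x t) xs)) + t" .
  qed
qed

lemma Rs_cooled_gsum_le:
  assumes nz: "\<forall>x\<in>set xs. nz_game x" and t: "0 \<le> t"
    and IH: "\<And>i b. i < length xs \<Longrightarrow> b |\<in>| ropts (xs ! i) \<Longrightarrow>
      Ls (gsum (map (\<lambda>x. cool x t) (xs[i := b]))) \<le> Ls (gsum (xs[i := b]))"
  shows "Rs (gsum (map (\<lambda>x. cool x t) xs)) - t \<le> Rs (gsum xs)"
proof (cases "\<forall>x\<in>set xs. is_number x")
  case True
  then have "map (\<lambda>x. cool x t) xs = xs"
    by (intro map_idI) (auto simp: is_number_def)
  with t show ?thesis by simp
next
  case False
  have d: "dicotic_game (gsum xs)"
    using nz by (intro nz_game_dicotic nz_game_gsum) auto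
  with False nz have "\<not> is_number (gsum xs)"
    by (simp add: is_number_gsum nz_game_dicotic)
  then show ?thesis
  proof (rule Rs_geI[OF d])
    fix z
    assume "z |\<in>| ropts (gsum xs)"
    then obtain i b where i: "i < length xs" and b: "b |\<in>| ropts (xs ! i)" and z: "z = gsum (xs[i := b])"
      by (auto simp: ropts_gsum)
    define R where "R = gsum ((map (\<lambda>x. cool x t) xs)[i := num 0])"
    have "nz_game R"
      unfolding R_def using nz t set_update_subset_insert
      by (intro nz_game_gsum) (fastforce intro: nz_game_cool nz_numI)
    have "Rs (gsum (map (\<lambda>x. cool x t) xs)) - t = Rs (gplus (cool (xs ! i) t) R) - t"
      using gsum_map_cool_update[OF i, of t "xs ! i"] by (simp add: R_def)
    also have "\<dots> \<le> Ls (gplus (cool b t) R)"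
      using nz i b t \<open>nz_game R\<close> by (intro Rs_gplus_cool_le_ropt) auto
    also have "\<dots> \<le> Ls z"
      using IH[OF i b] z i by (simp add: gsum_map_cool_update R_def)
    finally show "Rs (gsum (map (\<lambda>x. cool x t) xs)) - t \<le> Ls z" .
  qed
qed

lemma cooled_gsum_bounds:
  assumes "\<forall>x\<in>set xs. nz_game x" "0 \<le> t"
  shows "Ls (gsum (map (\<lambda>x. cool x t) xs)) \<le> Ls (gsum xs)
    \<and> Ls (gsum xs) \<le> Ls (gsum (map (\<lambda>x. cool x t) xs)) + t
    \<and> Rs (gsum (map (\<lambda>x. cool x t) xs)) - t \<le> Rs (gsum xs)
    \<and> Rs (gsum xs) \<le> Rs (gsum (map (\<lambda>x. cool x t) xs))"
  using assms
proof (induction "sum_list (map size xs)" arbitrary: xs t rule: less_induct)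
  case less
  have IH: "Ls (gsum (map (\<lambda>x. cool x s) (xs[i := a]))) \<le> Ls (gsum (xs[i := a]))
    \<and> Ls (gsum (xs[i := a])) \<le> Ls (gsum (map (\<lambda>x. cool x s) (xs[i := a]))) + s
    \<and> Rs (gsum (map (\<lambda>x. cool x s) (xs[i := a]))) - s \<le> Rs (gsum (xs[i := a]))
    \<and> Rs (gsum (xs[i := a])) \<le> Rs (gsum (map (\<lambda>x. cool x s) (xs[i := a])))"
    if i: "i < length xs" and a: "a |\<in>| lopts (xs ! i) |\<union>| ropts (xs ! i)" and s: "0 \<le> s" for i a s
  proof (rule less.hyps)
    have "size a < size (xs ! i)"
      using a size_lopts size_ropts by auto
    moreover have "size (xs ! i) \<le> sum_list (map size xs)"
      using i elem_le_sum_list[of i "map size xs"] by simp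
    ultimately show "sum_list (map size (xs[i := a])) < sum_list (map size xs)"
      using i by (simp add: map_update sum_list_update)
    show "\<forall>x\<in>set (xs[i := a]). nz_game x"
      using less.prems(1) i a by (intro nz_game_list_update) (auto intro: nz_game_opts)
  qed (rule s)
  show ?case
    using Ls_cooled_gsum_le[OF less.prems] Ls_gsum_le_cooled[OF less.prems]
      Rs_cooled_gsum_le[OF less.prems] Rs_gsum_le_cooled[OF less.prems] IH less.prems(2)
    by (metis funion_iff)
qed

section \<open>The mean\<close>

lemma mean_eqI:
  assumes "\<And>n. real n * v \<le> Ls (gmult n G)" "\<And>n. Ls (gmult n G) \<le> real n * v + c"
  shows "mean G = v"
proof -
  have "(\<lambda>n. Ls (gmult n G) / real n) \<longlonglongrightarrow> v"
  proof (rule tendsto_sandwich[of "\<lambda>n. v" _ _ "\<lambda>n. v + c / real n"])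
    show "\<forall>\<^sub>F n in sequentially. v \<le> Ls (gmult n G) / real n"
      using eventually_gt_at_top[of 0] by eventually_elim (use assms(1) in \<open>simp add: field_simps\<close>)
    show "\<forall>\<^sub>F n in sequentially. Ls (gmult n G) / real n \<le> v + c / real n"
      using eventually_gt_at_top[of 0] by eventually_elim (use assms(2) in \<open>simp add: field_simps\<close>)
    show "(\<lambda>n. v + c / real n) \<longlonglongrightarrow> v"
      using tendsto_add[OF tendsto_const lim_const_over_n[of c]] by simp
  qed simp
  then show ?thesis
    unfolding mean_def by (rule limI)
qed

lemma gmult_num: "gmult n (num v) = num (real n * v)"
  by (induction n) (simp_all add: gplus_num algebra_simps)

lemma mean_eq_Ls_cool_temp:
  assumes nz: "nz_game G"
  shows "mean G = Ls (cool G (temp G))"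
proof (rule mean_eqI)
  define t where "t = temp G + 1"
  have t: "0 \<le> t" "temp G < t"
    using temp_nonneg[OF nz] by (simp_all add: t_def)
  have "gsum (map (\<lambda>x. cool x t) (replicate n G)) = num (real n * Ls (cool G (temp G)))" for n
    using gmult_num[of n] by (simp add: gmult_eq_gsum cool_above_temp[OF nz t(2)])
  then show "real n * Ls (cool G (temp G)) \<le> Ls (gmult n G)"
    "Ls (gmult n G) \<le> real n * Ls (cool G (temp G)) + t" for n
    using cooled_gsum_bounds[of "replicate n G" t] nz t(1) by (auto simp: gmult_eq_gsum)
qed

lemma positions_nz_game:
  assumes "dicotic G" "nonzugzwang G" "\<forall>H\<in>positions G. terminal H \<longrightarrow> is_number H"
    and "H \<in> positions G"
  shows "nz_game H"
  using assms(4)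
proof (induction H rule: measure_induct_rule[of size])
  case (less H)
  show ?case
  proof (cases "lopts H = {||}")
    case True
    then have "is_number H"
      using assms(1,3) less.prems by (auto simp: dicotic_def terminal_def)
    then show ?thesis
      by (auto simp: is_number_def intro: nz_numI)
  next
    case False
    then have "ropts H \<noteq> {||}"
      using assms(1) less.prems by (auto simp: dicotic_def)
    with False obtain A B where H: "H = SGame (Inr A) (Inr B)" "A \<noteq> {||}" "B \<noteq> {||}"
      by (cases H; rename_tac l r; case_tac l; case_tac r) (auto simp: lopts_def ropts_def opts_def)
    have "nz_game x" if "x |\<in>| A |\<union>| B" for x
      using that less.IH less.prems H(1) size_lopts size_ropts positions.lopt positions.ropt
      by (metis funion_iff lopts_SGame ropts_SGame)
    moreover have "Rs H \<le> Ls H"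
      using assms(2) less.prems by (auto simp: nonzugzwang_def)
    ultimately show ?thesis
      using H by (auto intro: nz_gameI)
  qed
qed

theorem mainTheorem5:
  fixes G :: sgame
  assumes "sgwf G"
    and "dicotic G"
    and "nonzugzwang G"
    and "\<forall>H\<in>positions G. terminal H \<longrightarrow> is_number H"
  shows "mean G - temp G \<le> Rs G \<and> Rs G \<le> mean G \<and> mean G \<le> Ls G \<and> Ls G \<le> mean G + temp G"
proof -
  have nz: "nz_game G"
    using positions_nz_game[OF assms(2-4) positions.self] .
  have \<tau>: "0 \<le> temp G"
    using temp_nonneg[OF nz] .
  have "Ls (cool G (temp G)) \<le> Ls G" "Ls G \<le> Ls (cool G (temp G)) + temp G"
    "Rs G \<le> Rs (cool G (temp G))" "Rs (cool G (temp G)) \<le> Rs G + temp G"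
    using Ls_cool_antimono[OF nz \<tau>] Ls_cool_slope[OF nz \<tau>] Rs_cool_mono[OF nz \<tau>]
      Rs_cool_slope[OF nz \<tau>]
    by (simp_all add: cool_0[OF nz])
  then show ?thesis
    using mean_eq_Ls_cool_temp[OF nz] Rs_eq_Ls_cool_temp[OF nz] by auto
qed

end
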